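(* Let $b\ge 1$ and let $D_1(l),\dots,D_b(l)$ and $D_1(l+1),\dots,D_b(l+1)$ be real numbers such that, for each level $m\in\{l,l+1\}$, the numbers $D_1(m),\dots,D_b(m)$ are nonzero with pairwise distinct absolute values, and $D_i(l+1)\le D_i(l)$ for all $i$. For $m\in\{l,l+1\}$ let $T^+(m)=\sum_{i=1}^b R_i(m)\mathbf{1}\{D_i(m)>0\}$, where $R_i(m)$ is the rank of $|D_i(m)|$ among $\{|D_1(m)|,\dots,|D_b(m)|\}$ (rank $1$ for the smallest), and let $P(m)=\{i:D_i(m)>0\}$. If $P(l+1)\subsetneq P(l)$, then $T^+(l+1)<T^+(l)$.
   Context: $T^+(m)$ is the Wilcoxon signed-rank (positive rank sum) statistic of the values $D_1(m),\dots,D_b(m)$. *)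

theory Defs
  imports Complex_Main
begin

text \<open>Values D_1,...,D_b are given as a function x :: nat => real on the index set {1..b}.
  The rank of |x i| among |x 1|,...,|x b| (rank 1 for the smallest; values assumed distinct).\<close>
definition abs_rank :: "(nat \<Rightarrow> real) \<Rightarrow> nat \<Rightarrow> nat \<Rightarrow> nat" where
  "abs_rank x b i = card {j \<in> {1..b}. \<bar>x j\<bar> \<le> \<bar>x i\<bar>}"

definition T_plus :: "(nat \<Rightarrow> real) \<Rightarrow> nat \<Rightarrow> nat" where
  "T_plus x b = (\<Sum>i\<in>{1..b}. abs_rank x b i * (if x i > 0 then 1 else 0))"

definition pos_set :: "(nat \<Rightarrow> real) \<Rightarrow> nat \<Rightarrow> nat set" where
  "pos_set x b = {i \<in> {1..b}. x i > 0}"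

end

theory Submission
  imports Defs
begin

text \<open>When the absolute values are distinct, a pair \<open>i \<le> j\<close> has \<open>x i + x j > 0\<close> exactly
  when the entry of larger absolute value is positive. Counting such pairs by that entry
  shows that \<open>T\<^sup>+\<close> is the number of positive Walsh averages \<open>(x i + x j) / 2\<close>, \<open>i \<le> j\<close>.
  This count cannot grow when every entry decreases, and it drops strictly once some \<open>x k\<close>
  becomes nonpositive, because the pair \<open>(k, k)\<close> is lost.\<close>

lemma min_max_eq_pair_or_swap:
  fixes i j i' j' :: "'a::linorder"
  assumes "min i j = min i' j'" "max i j = max i' j'"
  shows "(i', j') = (i, j) \<or> (i', j') = (j, i)"
  using assms by (cases "i \<le> j"; cases "i' \<le> j'") (auto simp: min_def max_def)

definition pos_walsh_pairs :: "(nat \<Rightarrow> real) \<Rightarrow> nat \<Rightarrow> (nat \<times> nat) set" where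
  "pos_walsh_pairs x b = {(i, j) \<in> {1..b} \<times> {1..b}. i \<le> j \<and> 0 < x i + x j}"

lemma finite_pos_walsh_pairs: "finite (pos_walsh_pairs x b)"
  by (rule finite_subset[of _ "{1..b} \<times> {1..b}"]) (auto simp: pos_walsh_pairs_def)

lemma pos_walsh_pairs_mono:
  assumes "\<And>i. i \<in> {1..b} \<Longrightarrow> x i \<le> y i"
  shows "pos_walsh_pairs x b \<subseteq> pos_walsh_pairs y b"
proof clarify
  fix i j
  assume "(i, j) \<in> pos_walsh_pairs x b"
  with assms[of i] assms[of j] show "(i, j) \<in> pos_walsh_pairs y b"
    unfolding pos_walsh_pairs_def by auto
qed

lemma diag_in_pos_walsh_pairs_iff:
  "(k, k) \<in> pos_walsh_pairs x b \<longleftrightarrow> k \<in> pos_set x b"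
  unfolding pos_walsh_pairs_def pos_set_def by auto

lemma abs_rank_times_indicator:
  assumes dist: "\<And>j. j \<in> {1..b} \<Longrightarrow> j \<noteq> i \<Longrightarrow> \<bar>x j\<bar> \<noteq> \<bar>x i\<bar>"
  shows "abs_rank x b i * (if x i > 0 then 1 else 0)
           = card {j \<in> {1..b}. \<bar>x j\<bar> \<le> \<bar>x i\<bar> \<and> 0 < x i + x j}"
proof (cases "x i > 0")
  case True
  have "0 < x i + x j" if "j \<in> {1..b}" "\<bar>x j\<bar> \<le> \<bar>x i\<bar>" for j
    using True that dist[of j] by (cases "j = i") auto
  then have "{j \<in> {1..b}. \<bar>x j\<bar> \<le> \<bar>x i\<bar> \<and> 0 < x i + x j} = {j \<in> {1..b}. \<bar>x j\<bar> \<le> \<bar>x i\<bar>}"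
    by blast
  then show ?thesis
    using True unfolding abs_rank_def by simp
next
  case False
  then have "{j \<in> {1..b}. \<bar>x j\<bar> \<le> \<bar>x i\<bar> \<and> 0 < x i + x j} = {}"
    by auto
  then show ?thesis
    using False by simp
qed

lemma T_plus_eq_card_Sigma:
  assumes dist: "\<And>i j. i \<in> {1..b} \<Longrightarrow> j \<in> {1..b} \<Longrightarrow> i \<noteq> j \<Longrightarrow> \<bar>x i\<bar> \<noteq> \<bar>x j\<bar>"
  shows "T_plus x b = card (SIGMA i:{1..b}. {j \<in> {1..b}. \<bar>x j\<bar> \<le> \<bar>x i\<bar> \<and> 0 < x i + x j})"
proof -
  have "T_plus x b = (\<Sum>i\<in>{1..b}. card {j \<in> {1..b}. \<bar>x j\<bar> \<le> \<bar>x i\<bar> \<and> 0 < x i + x j})"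
    unfolding T_plus_def
    by (intro sum.cong refl abs_rank_times_indicator) (use dist in blast)
  then show ?thesis
    by (simp add: card_SigmaI)
qed

lemma T_plus_eq_card_pos_walsh_pairs:
  assumes dist: "\<And>i j. i \<in> {1..b} \<Longrightarrow> j \<in> {1..b} \<Longrightarrow> i \<noteq> j \<Longrightarrow> \<bar>x i\<bar> \<noteq> \<bar>x j\<bar>"
  shows "T_plus x b = card (pos_walsh_pairs x b)"
proof -
  define S where
    "S = (SIGMA i:{1..b}. {j \<in> {1..b}. \<bar>x j\<bar> \<le> \<bar>x i\<bar> \<and> 0 < x i + x j})"
  let ?sort = "\<lambda>(i, j). (min i j, max i j)"
  have antisym: "i = j" if "(i, j) \<in> S" "(j, i) \<in> S" for i j
    using that dist[of i j] unfolding S_def by fastforce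
  have inj: "inj_on ?sort S"
  proof (rule inj_onI)
    fix p q
    assume "p \<in> S" "q \<in> S" "?sort p = ?sort q"
    moreover obtain i j i' j' where "p = (i, j)" "q = (i', j')"
      by fastforce
    ultimately show "p = q"
      using min_max_eq_pair_or_swap[of i j i' j'] antisym by auto
  qed
  have image: "?sort ` S = pos_walsh_pairs x b"
  proof
    show "?sort ` S \<subseteq> pos_walsh_pairs x b"
      unfolding S_def pos_walsh_pairs_def by (auto simp: min_def max_def)
  next
    show "pos_walsh_pairs x b \<subseteq> ?sort ` S"
    proof clarify
      fix i j
      assume ij: "(i, j) \<in> pos_walsh_pairs x b"
      then have "(i, j) = ?sort (i, j)" "(i, j) = ?sort (j, i)"
        unfolding pos_walsh_pairs_def by auto
      moreover have "(i, j) \<in> S \<or> (j, i) \<in> S"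
        using ij unfolding S_def pos_walsh_pairs_def by auto
      ultimately show "(i, j) \<in> ?sort ` S"
        by blast
    qed
  qed
  have "T_plus x b = card S"
    unfolding S_def by (rule T_plus_eq_card_Sigma[OF dist])
  also have "\<dots> = card (?sort ` S)"
    by (rule card_image[OF inj, symmetric])
  finally show ?thesis
    unfolding image .
qed

theorem mainTheorem4:
  fixes D :: "nat \<Rightarrow> nat \<Rightarrow> real" and b l :: nat
  assumes "b \<ge> 1"
    and nz: "\<And>m i. m \<in> {l, l+1} \<Longrightarrow> i \<in> {1..b} \<Longrightarrow> D m i \<noteq> 0"
    and dist: "\<And>m i j. m \<in> {l, l+1} \<Longrightarrow> i \<in> {1..b} \<Longrightarrow> j \<in> {1..b} \<Longrightarrow> i \<noteq> j
                 \<Longrightarrow> \<bar>D m i\<bar> \<noteq> \<bar>D m j\<bar>"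
    and mono: "\<And>i. i \<in> {1..b} \<Longrightarrow> D (l+1) i \<le> D l i"
    and sub: "pos_set (D (l+1)) b \<subset> pos_set (D l) b"
  shows "T_plus (D (l+1)) b < T_plus (D l) b"
proof -
  obtain k where "k \<in> pos_set (D l) b" "k \<notin> pos_set (D (l+1)) b"
    using sub by blast
  then have "pos_walsh_pairs (D (l+1)) b \<subset> pos_walsh_pairs (D l) b"
    using pos_walsh_pairs_mono[of b "D (l+1)" "D l", OF mono] diag_in_pos_walsh_pairs_iff by blast
  then have "card (pos_walsh_pairs (D (l+1)) b) < card (pos_walsh_pairs (D l) b)"
    by (simp add: psubset_card_mono finite_pos_walsh_pairs)
  moreover have "T_plus (D m) b = card (pos_walsh_pairs (D m) b)" if "m \<in> {l, l+1}" for m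
    using T_plus_eq_card_pos_walsh_pairs dist[OF that] by blast
  ultimately show ?thesis
    by simp
qed

end
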